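(* In the setting described in the context, for every vertex $v\in V_L$ of $\mathfrak L_1$ the relation $\sim_v$ is an equivalence relation on $B_L(\Lambda_1,v)$.
   Context: $\mathbb Z_+=\{0,1,2,\dots\}$, $\mathbb N=\{1,2,\dots\}$. A $\lambda$-graph system $\mathfrak L=(V,E,\lambda,\iota)$ over a finite alphabet $\Sigma$ consists of finite nonempty pairwise disjoint vertex sets $V_l$ ($l\in\mathbb Z_+$); finite pairwise disjoint edge sets $E_{l,l+1}$, each $e\in E_{l,l+1}$ having a source $s(e)\in V_l$ and a terminal $t(e)\in V_{l+1}$; a labeling map $\lambda:E\to\Sigma$; and surjections $\iota:V_{l+1}\to V_l$; such that every vertex is the source of some edge, every vertex in $V_l$ ($l\ge1$) is the terminal of some edge, and (local property) for all $l\ge1$, $u\in V_{l-1}$, $v\in V_{l+1}$ there is a label-preserving bijection between $\{e\in E_{l,l+1}: \iota(s(e))=u,\ t(e)=v\}$ and $\{e\in E_{l-1,l}: s(e)=u,\ t(e)=\iota(v)\}$. Left-resolving: $t(e)=t(f)$, $\lambda(e)=\lambda(f)$ imply $e=f$. $\Omega_{\mathfrak L}=\{(u^l)_{l}\in\prod_l V_l: \iota(u^{l+1})=u^l\}$. $E_{\mathfrak L}$ = set of $(u,\alpha,w)\in\Omega_{\mathfrak L}\times\Sigma\times\Omega_{\mathfrak L}$ such that for each $l$ some $e\in E_{l,l+1}$ has $s(e)=u^l$, $t(e)=w^{l+1}$, $\lambda(e)=\alpha$. $X_{\mathfrak L}$ = set of $x=(\alpha_i,u_i)_{i\in\mathbb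 N}$ in $\Sigma\times\Omega_{\mathfrak L}$ with $(u_i,\alpha_{i+1},u_{i+1})\in E_{\mathfrak L}$ for all $i$ and $(u_0,\alpha_1,u_1)\in E_{\mathfrak L}$ for some $u_0$; relative product topology; $\sigma_{\mathfrak L}$ the left shift. For such $x$: $x_{[k,\infty)}=(\alpha_i,u_i)_{i\ge k}$; $\pi_{\mathfrak L}(x)=(\alpha_i)_{i\in\mathbb N}$, $\pi_{\mathfrak L}(x)_{[1,k]}=(\alpha_1,\dots,\alpha_k)$; $v^l_n(x)$ denotes the $l$-th coordinate $u_n^l$ of $u_n$. $X_\Lambda=\pi_{\mathfrak L}(X_{\mathfrak L})$, $B_k(X_\Lambda)$ its words of length $k$. Setting: $\mathfrak L_1,\mathfrak L_2$ are left-resolving $\lambda$-graph systems; write $\pi_i=\pi_{\mathfrak L_i}$, $\Lambda_i$ for the presented subshifts. $\psi_0:X_{\mathfrak L_1}\to X_{\mathfrak L_2}$ is a continuous surjection with $\sigma_{\mathfrak L_2}\circ\psi_0=\psi_0\circ\sigma_{\mathfrak L_1}$, and $1\le l\le L$ are integers such that (a) $\psi_0(x)=\psi_0(x')$ implies $x_{[l,\infty)}=x'_{[l,\infty)}$; (b) there is a map $\Psi:B_L(X_{\Lambda_1})\to B_l(X_{\Lambda_2})$ with $\pi_2(\psi_0(x))_{[1,l]}=\Psi(\pi_1(x)_{[1,L]})$ for all $x\in X_{\mathfrak L_1}$. (This is the situation obtained from an $(\mathfrak L_1,\mathfrak L_2)$-conjugacy of two-sided subshifts.) For $v\in V_L$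 (vertices of $\mathfrak L_1$), $B_L(\Lambda_1,v)$ is the set of $\mu\in B_L(X_{\Lambda_1})$ such that $\mu=\pi_1(x)_{[1,L]}$ for some $x\in X_{\mathfrak L_1}$ with $v^L_L(x)=v$. For $\mu,\mu'\in B_L(\Lambda_1,v)$, $\mu\sim_v\mu'$ means: there exist $x,x'\in X_{\mathfrak L_1}$ with $\pi_1(x)_{[1,L]}=\mu$, $\pi_1(x')_{[1,L]}=\mu'$, $v^L_L(x)=v^L_L(x')=v$ and $\psi_0(x)=\psi_0(x')$. *)

theory Defs
  imports "HOL-Analysis.Analysis"
begin

text \<open>Vertex sets V l; edge set
  E l stands for E_{l,l+1}; src/trg/lab are source, terminal, label; iota is
  the map V_{l+1} -> V_l (one global function, the vertex sets being disjoint).\<close>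

record ('v, 'e, 'a) lgs =
  Sig  :: "'a set"
  V    :: "nat \<Rightarrow> 'v set"
  E    :: "nat \<Rightarrow> 'e set"
  src  :: "'e \<Rightarrow> 'v"
  trg  :: "'e \<Rightarrow> 'v"
  lab  :: "'e \<Rightarrow> 'a"
  iota :: "'v \<Rightarrow> 'v"

definition lambda_graph_system :: "('v, 'e, 'a) lgs \<Rightarrow> bool" where
  "lambda_graph_system L \<longleftrightarrow>
     finite (Sig L) \<and>
     (\<forall>l. finite (V L l) \<and> V L l \<noteq> {}) \<and>
     (\<forall>l m. l \<noteq> m \<longrightarrow> V L l \<inter> V L m = {}) \<and>
     (\<forall>l. finite (E L l)) \<and>
     (\<forall>l m. l \<noteq> m \<longrightarrow> E L l \<inter> E L m = {}) \<and>
     (\<forall>l. \<forall>e\<in>E L l. src L e \<in> V L l \<and> trg L e \<in> V L (Suc l) \<and> lab L e \<in> Sig L) \<and>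
     (\<forall>l. iota L ` V L (Suc l) = V L l) \<and>
     (\<forall>l. \<forall>v\<in>V L l. \<exists>e\<in>E L l. src L e = v) \<and>
     (\<forall>l\<ge>1. \<forall>v\<in>V L l. \<exists>e\<in>E L (l - 1). trg L e = v) \<and>
     (\<forall>l\<ge>1. \<forall>u\<in>V L (l - 1). \<forall>v\<in>V L (Suc l).
        \<exists>f. bij_betw f {e\<in>E L l. iota L (src L e) = u \<and> trg L e = v}
                       {e\<in>E L (l - 1). src L e = u \<and> trg L e = iota L v}
            \<and> (\<forall>e\<in>{e\<in>E L l. iota L (src L e) = u \<and> trg L e = v}. lab L (f e) = lab L e))"

definition left_resolving :: "('v, 'e, 'a) lgs \<Rightarrow> bool" where
  "left_resolving L \<longleftrightarrow>
     (\<forall>l. \<forall>e\<in>E L l. \<forall>f\<in>E L l. trg L e = trg L f \<and> lab L e = lab L f \<longrightarrow> e = f)"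

definition Omega :: "('v, 'e, 'a) lgs \<Rightarrow> (nat \<Rightarrow> 'v) set" where
  "Omega L = {u. (\<forall>l. u l \<in> V L l) \<and> (\<forall>l. iota L (u (Suc l)) = u l)}"

definition EL :: "('v, 'e, 'a) lgs \<Rightarrow> ((nat \<Rightarrow> 'v) \<times> 'a \<times> (nat \<Rightarrow> 'v)) set" where
  "EL L = {(u, \<alpha>, w). u \<in> Omega L \<and> \<alpha> \<in> Sig L \<and> w \<in> Omega L \<and>
              (\<forall>l. \<exists>e\<in>E L l. src L e = u l \<and> trg L e = w (Suc l) \<and> lab L e = \<alpha>)}"

text \<open>Points of X_L.  The paper indexes x = (alpha_i, u_i)_{i>=1}; we shift to
  0-based indexing: x n = (alpha_{n+1}, u_{n+1}).\<close>
definition XL :: "('v, 'e, 'a) lgs \<Rightarrow> (nat \<Rightarrow> 'a \<times> (nat \<Rightarrow> 'v)) set" where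
  "XL L = {x. (\<forall>i. (snd (x i), fst (x (Suc i)), snd (x (Suc i))) \<in> EL L) \<and>
              (\<exists>u0. (u0, fst (x 0), snd (x 0)) \<in> EL L)}"

definition Omega_top :: "('v, 'e, 'a) lgs \<Rightarrow> (nat \<Rightarrow> 'v) topology" where
  "Omega_top L = subtopology (product_topology (\<lambda>l. discrete_topology (V L l)) UNIV) (Omega L)"

definition XL_top :: "('v, 'e, 'a) lgs \<Rightarrow> (nat \<Rightarrow> 'a \<times> (nat \<Rightarrow> 'v)) topology" where
  "XL_top L = subtopology
     (product_topology (\<lambda>i. prod_topology (discrete_topology (Sig L)) (Omega_top L)) UNIV) (XL L)"

definition shift :: "(nat \<Rightarrow> 'b) \<Rightarrow> (nat \<Rightarrow> 'b)" where
  "shift x = (\<lambda>n. x (Suc n))"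

definition word :: "(nat \<Rightarrow> 'a \<times> 'c) \<Rightarrow> nat \<Rightarrow> 'a list" where
  "word x k = map (\<lambda>i. fst (x i)) [0..<k]"

text \<open>v^l_n(x) = l-th coordinate of u_n (n >= 1).\<close>
definition vcoord :: "(nat \<Rightarrow> 'a \<times> (nat \<Rightarrow> 'v)) \<Rightarrow> nat \<Rightarrow> nat \<Rightarrow> 'v" where
  "vcoord x l n = snd (x (n - 1)) l"

definition Bwords :: "('v, 'e, 'a) lgs \<Rightarrow> nat \<Rightarrow> 'a list set" where
  "Bwords L k = {word x k | x. x \<in> XL L}"

definition Bv :: "('v, 'e, 'a) lgs \<Rightarrow> nat \<Rightarrow> 'v \<Rightarrow> 'a list set" where
  "Bv L k v = {word x k | x. x \<in> XL L \<and> vcoord x k k = v}"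

definition simv :: "('v, 'e, 'a) lgs \<Rightarrow> ((nat \<Rightarrow> 'a \<times> (nat \<Rightarrow> 'v)) \<Rightarrow> 'c)
                    \<Rightarrow> nat \<Rightarrow> 'v \<Rightarrow> 'a list \<Rightarrow> 'a list \<Rightarrow> bool" where
  "simv L \<psi> k v \<mu> \<mu>' \<longleftrightarrow>
     (\<exists>x\<in>XL L. \<exists>x'\<in>XL L. word x k = \<mu> \<and> word x' k = \<mu>' \<and>
        vcoord x k k = v \<and> vcoord x' k k = v \<and> \<psi> x = \<psi> x')"

end

theory Submission
  imports Defs
begin

text \<open>Reflexivity and symmetry of \<open>\<sim>\<^sub>v\<close> are immediate; transitivity is the content.
  From witnesses \<open>\<psi>\<^sub>0 x = \<psi>\<^sub>0 x'\<close> and \<open>\<psi>\<^sub>0 y' = \<psi>\<^sub>0 y''\<close> for \<open>\<mu> \<sim>\<^sub>v \<mu>' \<sim>\<^sub>v \<mu>''\<close>, hypothesis (a)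
  shows that \<open>x\<close> and \<open>y''\<close> carry the same labels on positions \<open>[l, L]\<close> and end in the same
  vertex \<open>v\<close>.  Left-resolvingness pulls this agreement back along the diagonal, and the
  local property then lets us prefix the first \<open>l - 1\<close> labels of \<open>x\<close> to the tail of \<open>y''\<close>.
  The spliced point has word \<open>\<mu>\<close> and the same image as \<open>y''\<close>: the images agree from
  position \<open>l\<close> on because \<open>\<psi>\<^sub>0\<close> commutes with the shift, their first \<open>l\<close> labels agree by (b), and
  left-resolvingness of the second system recovers the remaining vertices.\<close>

lemma Omega_iota: "u \<in> Omega L \<Longrightarrow> iota L (u (Suc l)) = u l"
  by (simp add: Omega_def)

lemma Omega_eq_below:
  assumes "u \<in> Omega L" "u' \<in> Omega L" "u n = u' n" "m \<le> n"
  shows "u m = u' m"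
  using assms(4)
proof (induction m rule: inc_induct)
  case base
  show ?case using assms(3) .
next
  case (step k)
  then show ?case using Omega_iota[OF assms(1)] Omega_iota[OF assms(2)] by metis
qed

lemma EL_edge:
  "(u, \<alpha>, w) \<in> EL L \<Longrightarrow> \<exists>e\<in>E L l. src L e = u l \<and> trg L e = w (Suc l) \<and> lab L e = \<alpha>"
  by (simp add: EL_def)

lemma EL_Omega: "(u, \<alpha>, w) \<in> EL L \<Longrightarrow> u \<in> Omega L \<and> \<alpha> \<in> Sig L \<and> w \<in> Omega L"
  by (simp add: EL_def)

lemma EL_src_eq_if_trg_eq:
  assumes "left_resolving L" "(u, \<alpha>, w) \<in> EL L" "(u', \<alpha>, w') \<in> EL L"
    and "w (Suc l) = w' (Suc l)"
  shows "u l = u' l"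
proof -
  obtain e where "e \<in> E L l" "src L e = u l" "trg L e = w (Suc l)" "lab L e = \<alpha>"
    using EL_edge[OF assms(2)] by blast
  moreover obtain e' where "e' \<in> E L l" "src L e' = u' l" "trg L e' = w' (Suc l)" "lab L e' = \<alpha>"
    using EL_edge[OF assms(3)] by blast
  ultimately show ?thesis
    using assms(1,4) unfolding left_resolving_def by metis
qed

lemma EL_left_unique:
  assumes "left_resolving L" "(u, \<alpha>, w) \<in> EL L" "(u', \<alpha>, w) \<in> EL L"
  shows "u = u'"
  using EL_src_eq_if_trg_eq[OF assms] by blast

text \<open>The surjective half of the local property: every edge into \<open>iota v\<close> lifts to an
  edge into \<open>v\<close> one level up, with the same label.\<close>

lemma lambda_graph_system_lift_edge:
  assumes lg: "lambda_graph_system L"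
    and f: "f \<in> E L m" "trg L f = iota L v" and v: "v \<in> V L (Suc (Suc m))"
  shows "\<exists>e\<in>E L (Suc m). iota L (src L e) = src L f \<and> trg L e = v \<and> lab L e = lab L f"
proof -
  let ?U = "{e\<in>E L (Suc m). iota L (src L e) = src L f \<and> trg L e = v}"
  have src: "src L f \<in> V L (Suc m - 1)"
    using lg f unfolding lambda_graph_system_def by auto
  have local: "\<forall>l\<ge>1. \<forall>u\<in>V L (l - 1). \<forall>v\<in>V L (Suc l).
        \<exists>g. bij_betw g {e\<in>E L l. iota L (src L e) = u \<and> trg L e = v}
                       {e\<in>E L (l - 1). src L e = u \<and> trg L e = iota L v}
            \<and> (\<forall>e\<in>{e\<in>E L l. iota L (src L e) = u \<and> trg L e = v}. lab L (g e) = lab L e)"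
    using lg unfolding lambda_graph_system_def by blast
  obtain g
    where g: "bij_betw g ?U {e\<in>E L (Suc m - 1). src L e = src L f \<and> trg L e = iota L v}"
      and g_lab: "\<forall>e\<in>?U. lab L (g e) = lab L e"
    using local[rule_format, OF _ src v] by auto
  have "f \<in> g ` ?U"
    using g f unfolding bij_betw_def by simp
  then show ?thesis using g_lab by force
qed

lemma EL_lift_edge:
  assumes lg: "lambda_graph_system L" and w: "w \<in> Omega L"
    and e: "e \<in> E L 0" "trg L e = w 1"
  shows "\<exists>u. (u, lab L e, w) \<in> EL L"
proof -
  let ?P = "\<lambda>m f. f \<in> E L m \<and> trg L f = w (Suc m) \<and> lab L f = lab L e"
  have "\<exists>e'. ?P (Suc m) e' \<and> iota L (src L e') = src L f" if "?P m f" for m f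
    using lambda_graph_system_lift_edge[OF lg, of f m "w (Suc (Suc m))"] that w
    by (auto simp: Omega_def)
  then have "\<exists>F. \<forall>m. ?P m (F m) \<and> iota L (src L (F (Suc m))) = src L (F m)"
    by (intro dependent_nat_choice) (use e in auto)
  then obtain F where F: "\<And>m. ?P m (F m)" "\<And>m. iota L (src L (F (Suc m))) = src L (F m)"
    by blast
  have edges: "\<forall>l. \<forall>e\<in>E L l. src L e \<in> V L l \<and> trg L e \<in> V L (Suc l) \<and> lab L e \<in> Sig L"
    using lg unfolding lambda_graph_system_def by blast
  have "(\<lambda>m. src L (F m)) \<in> Omega L"
    using F edges unfolding Omega_def by auto
  then have "((\<lambda>m. src L (F m)), lab L e, w) \<in> EL L"
    using F edges e w unfolding EL_def by auto
  then show ?thesis by blast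
qed

lemma EL_predecessor_transfer:
  assumes "lambda_graph_system L" "(w, \<alpha>, u) \<in> EL L" "u' \<in> Omega L" "u' 1 = u 1"
  shows "\<exists>w'. (w', \<alpha>, u') \<in> EL L"
proof -
  obtain e where "e \<in> E L 0" "trg L e = u 1" "lab L e = \<alpha>"
    using EL_edge[OF assms(2), of 0] by auto
  then show ?thesis
    using EL_lift_edge[OF assms(1,3), of e] assms(4) by auto
qed

lemma XL_step: "x \<in> XL L \<Longrightarrow> (snd (x i), fst (x (Suc i)), snd (x (Suc i))) \<in> EL L"
  by (simp add: XL_def)

lemma XL_predecessor: "x \<in> XL L \<Longrightarrow> \<exists>u. (u, fst (x i), snd (x i)) \<in> EL L"
  by (cases i) (auto simp: XL_def)

lemma XL_shift: "x \<in> XL L \<Longrightarrow> shift x \<in> XL L"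
  using XL_predecessor[of x L 1] by (auto simp: XL_def shift_def)

lemma XL_Cons:
  assumes "x \<in> XL L" "(u, fst (x 0), snd (x 0)) \<in> EL L" "(w, \<alpha>, u) \<in> EL L"
  shows "case_nat (\<alpha>, u) x \<in> XL L"
  unfolding XL_def
proof (intro CollectI conjI allI exI)
  fix i
  show "(snd (case_nat (\<alpha>, u) x i), fst (case_nat (\<alpha>, u) x (Suc i)),
         snd (case_nat (\<alpha>, u) x (Suc i))) \<in> EL L"
    using assms(1,2) XL_step by (cases i) auto
qed (use assms(3) in simp_all)

lemma funpow_shift: "(shift ^^ n) x = (\<lambda>i. x (i + n))"
  by (induction n arbitrary: x) (simp_all add: shift_def funpow_Suc_right)

lemma funpow_shift_commute:
  assumes "\<forall>x\<in>X. \<psi> (shift x) = shift (\<psi> x)" "\<forall>x\<in>X. shift x \<in> X" "x \<in> X"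
  shows "\<psi> ((shift ^^ n) x) = (shift ^^ n) (\<psi> x)"
  using assms(3)
proof (induction n arbitrary: x)
  case (Suc n)
  then show ?case using assms(1,2) by (simp add: funpow_Suc_right del: funpow.simps)
qed simp

lemma XL_diagonal_agree:
  assumes lr: "left_resolving L" and x: "x \<in> XL L" and y: "y \<in> XL L" and "n \<le> m"
    and labels: "\<forall>i. n < i \<and> i \<le> m \<longrightarrow> fst (x i) = fst (y i)"
    and top: "snd (x m) (Suc m) = snd (y m) (Suc m)"
  shows "snd (x n) (Suc n) = snd (y n) (Suc n)"
  using \<open>n \<le> m\<close>
proof (induction n rule: inc_induct)
  case base
  show ?case using top .
next
  case (step k)
  have "(snd (y k), fst (x (Suc k)), snd (y (Suc k))) \<in> EL L"
    using XL_step[OF y, of k] labels step.hyps by simp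
  then show ?case
    using EL_src_eq_if_trg_eq[OF lr XL_step[OF x, of k]] step.IH by blast
qed

lemma XL_eqI:
  assumes lr: "left_resolving L" and x: "x \<in> XL L" and z: "z \<in> XL L"
    and labels: "\<forall>i<n. fst (x i) = fst (z i)" and tails: "\<forall>i\<ge>n. x i = z i"
  shows "x = z"
proof
  fix i
  show "x i = z i"
  proof (cases "i \<le> n")
    case True
    then show ?thesis
    proof (induction i rule: inc_induct)
      case base
      show ?case using tails by simp
    next
      case (step k)
      have "(snd (z k), fst (x (Suc k)), snd (x (Suc k))) \<in> EL L"
        using XL_step[OF z, of k] step.IH by simp
      then have "snd (x k) = snd (z k)"
        using EL_left_unique[OF lr XL_step[OF x, of k]] by blast
      then show ?case using labels step.hyps by (simp add: prod_eq_iff)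
    qed
  qed (use tails in simp)
qed

text \<open>The prefix is built backwards one symbol at a time; agreement with \<open>x\<close> on the
  diagonal is the invariant that makes each new label admissible.\<close>

lemma XL_splice:
  assumes lg: "lambda_graph_system L" and lr: "left_resolving L"
    and x: "x \<in> XL L" and y: "y \<in> XL L"
    and label: "fst (y N) = fst (x N)" and diag: "snd (y N) (Suc N) = snd (x N) (Suc N)"
  shows "\<exists>p\<in>XL L. (\<forall>i\<ge>N. p i = y i) \<and> (\<forall>i\<le>N. fst (p i) = fst (x i))"
proof -
  have "\<exists>p\<in>XL L. (\<forall>i. N \<le> i + j \<longrightarrow> p i = y (i + j)) \<and>
                  (\<forall>i. i + j \<le> N \<longrightarrow> fst (p i) = fst (x (i + j))) \<and>
                  snd (p 0) (Suc j) = snd (x j) (Suc j)" (is "\<exists>p\<in>XL L. ?Q j p")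
    if "j \<le> N" for j
    using that
  proof (induction j rule: inc_induct)
    case base
    have "(shift ^^ N) y \<in> XL L"
      using y XL_shift by (induction N) auto
    then show ?case
      using label diag by (intro bexI[of _ "(shift ^^ N) y"]) (auto simp: funpow_shift)
  next
    case (step j)
    then obtain p where p: "p \<in> XL L" "?Q (Suc j) p" by blast
    obtain u where u: "(u, fst (p 0), snd (p 0)) \<in> EL L"
      using XL_predecessor[OF p(1)] by blast
    have "fst (p 0) = fst (x (Suc j))"
      using p(2) step.hyps by auto
    with u have "(u, fst (x (Suc j)), snd (p 0)) \<in> EL L" by simp
    then have "u (Suc j) = snd (x j) (Suc j)"
      using EL_src_eq_if_trg_eq[OF lr _ XL_step[OF x, of j]] p(2) by simp
    have "u 1 = snd (x j) 1"
      by (rule Omega_eq_below[of u L _ "Suc j"])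
         (use EL_Omega[OF u] EL_Omega[OF XL_step[OF x, of j]] \<open>u (Suc j) = _\<close> in auto)
    moreover obtain w where "(w, fst (x j), snd (x j)) \<in> EL L"
      using XL_predecessor[OF x] by blast
    ultimately obtain w' where "(w', fst (x j), u) \<in> EL L"
      using EL_predecessor_transfer[OF lg _ conjunct1[OF EL_Omega[OF u]]] by blast
    then have "case_nat (fst (x j), u) p \<in> XL L"
      using XL_Cons[OF p(1) u] by blast
    moreover have "?Q j (case_nat (fst (x j), u) p)"
    proof (intro conjI allI impI)
      fix i
      show "fst (case_nat (fst (x j), u) p i) = fst (x (i + j))" if "i + j \<le> N"
        using p(2) that by (cases i) auto
      show "case_nat (fst (x j), u) p i = y (i + j)" if "N \<le> i + j"
        using p(2) that step.hyps by (cases i) auto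
    qed (simp add: \<open>u (Suc j) = _\<close>)
    ultimately show ?case by blast
  qed
  from this[of 0] show ?thesis by auto
qed

lemma word_nth: "n < k \<Longrightarrow> word x k ! n = fst (x n)"
  by (simp add: word_def)

lemma word_eqI: "(\<And>i. i < k \<Longrightarrow> fst (x i) = fst (y i)) \<Longrightarrow> word x k = word y k"
  by (simp add: word_def)

lemma shift_commuting_map_eqI:
  assumes lr: "left_resolving L2" and into: "\<psi> ` XL L1 \<subseteq> XL L2"
    and comm: "\<forall>x\<in>XL L1. \<psi> (shift x) = shift (\<psi> x)"
    and x: "x \<in> XL L1" and z: "z \<in> XL L1"
    and tails: "\<forall>i\<ge>n. x i = z i" and labels: "\<forall>i<n. fst (\<psi> x i) = fst (\<psi> z i)"
  shows "\<psi> x = \<psi> z"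
proof (rule XL_eqI[OF lr _ _ labels])
  show "\<psi> x \<in> XL L2" "\<psi> z \<in> XL L2"
    using into x z by auto
  have "(shift ^^ n) x = (shift ^^ n) z"
    using tails by (simp add: funpow_shift)
  then have "(shift ^^ n) (\<psi> x) = (shift ^^ n) (\<psi> z)"
    using funpow_shift_commute[OF comm _ x] funpow_shift_commute[OF comm _ z] XL_shift
    by metis
  then show "\<forall>i\<ge>n. \<psi> x i = \<psi> z i"
    unfolding funpow_shift by (metis le_add_diff_inverse2)
qed

lemma simv_sym: "simv L \<psi> k v \<mu> \<mu>' \<Longrightarrow> simv L \<psi> k v \<mu>' \<mu>"
  unfolding simv_def by metis

lemma simv_trans:
  fixes \<psi> :: "(nat \<Rightarrow> 'a \<times> (nat \<Rightarrow> 'v)) \<Rightarrow> (nat \<Rightarrow> 'b \<times> (nat \<Rightarrow> 'w))"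
    and L1 :: "('v, 'e, 'a) lgs" and L2 :: "('w, 'f, 'b) lgs"
  assumes lg: "lambda_graph_system L1" and lr1: "left_resolving L1" and lr2: "left_resolving L2"
    and into: "\<psi> ` XL L1 \<subseteq> XL L2" and comm: "\<forall>x\<in>XL L1. \<psi> (shift x) = shift (\<psi> x)"
    and "1 \<le> l" "l \<le> L"
    and collapse: "\<forall>x\<in>XL L1. \<forall>x'\<in>XL L1. \<psi> x = \<psi> x' \<longrightarrow> (\<forall>i\<ge>l - 1. x i = x' i)"
    and block: "\<forall>x\<in>XL L1. word (\<psi> x) l = \<Psi> (word x L)"
    and "simv L1 \<psi> L v \<mu> \<mu>'" "simv L1 \<psi> L v \<mu>' \<mu>''"
  shows "simv L1 \<psi> L v \<mu> \<mu>''"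
proof -
  obtain x x' where x: "x \<in> XL L1" "x' \<in> XL L1" "word x L = \<mu>" "word x' L = \<mu>'"
      "vcoord x L L = v" "\<psi> x = \<psi> x'"
    using \<open>simv L1 \<psi> L v \<mu> \<mu>'\<close> unfolding simv_def by blast
  obtain y' y'' where y: "y' \<in> XL L1" "y'' \<in> XL L1" "word y' L = \<mu>'" "word y'' L = \<mu>''"
      "vcoord y'' L L = v" "\<psi> y' = \<psi> y''"
    using \<open>simv L1 \<psi> L v \<mu>' \<mu>''\<close> unfolding simv_def by blast
  define N where "N = l - 1"
  have "N < L" "Suc (L - 1) = L"
    using \<open>1 \<le> l\<close> \<open>l \<le> L\<close> by (auto simp: N_def)
  have labels: "fst (y'' i) = fst (x i)" if "N \<le> i" "i < L" for i
    using collapse x y that word_nth[of i L] unfolding N_def by metis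
  have top: "snd (y'' (L - 1)) (Suc (L - 1)) = snd (x (L - 1)) (Suc (L - 1))"
    using x(5) y(5) \<open>Suc (L - 1) = L\<close> by (simp add: vcoord_def)
  have "snd (y'' N) (Suc N) = snd (x N) (Suc N)"
    by (rule XL_diagonal_agree[OF lr1 y(2) x(1) _ _ top]) (use labels \<open>N < L\<close> in auto)
  then obtain p where p: "p \<in> XL L1" "\<forall>i\<ge>N. p i = y'' i" "\<forall>i\<le>N. fst (p i) = fst (x i)"
    using XL_splice[OF lg lr1 x(1) y(2)] labels \<open>N < L\<close> by blast
  have "word p L = \<mu>"
    using p labels x(3) by (metis word_eqI not_le order_less_imp_le)
  moreover have "vcoord p L L = v"
    using p(2) y(5) \<open>N < L\<close> by (simp add: vcoord_def)
  moreover have "\<psi> p = \<psi> y''"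
  proof (rule shift_commuting_map_eqI[OF lr2 into comm p(1) y(2) p(2)], intro allI impI)
    fix i assume "i < N"
    then have "i < l"
      by (simp add: N_def)
    have "word (\<psi> p) l = word (\<psi> y'') l"
      using block p(1) x y \<open>word p L = \<mu>\<close> by metis
    then show "fst (\<psi> p i) = fst (\<psi> y'' i)"
      using word_nth[OF \<open>i < l\<close>] by metis
  qed
  ultimately show ?thesis
    using p(1) y(2,4,5) unfolding simv_def by blast
qed

theorem lemma7p4:
  fixes L1 :: "('v, 'e, 'a) lgs" and L2 :: "('w, 'f, 'b) lgs"
    and \<psi>0 :: "(nat \<Rightarrow> 'a \<times> (nat \<Rightarrow> 'v)) \<Rightarrow> (nat \<Rightarrow> 'b \<times> (nat \<Rightarrow> 'w))"
    and \<Psi> :: "'a list \<Rightarrow> 'b list"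
    and l L :: nat and v :: 'v
  assumes "lambda_graph_system L1" and "left_resolving L1"
    and "lambda_graph_system L2" and "left_resolving L2"
    and "continuous_map (XL_top L1) (XL_top L2) \<psi>0"
    and "\<psi>0 ` XL L1 = XL L2"
    and "\<forall>x\<in>XL L1. \<psi>0 (shift x) = shift (\<psi>0 x)"
    and "1 \<le> l" and "l \<le> L"
    and "\<forall>x\<in>XL L1. \<forall>x'\<in>XL L1. \<psi>0 x = \<psi>0 x' \<longrightarrow> (\<forall>i\<ge>l - 1. x i = x' i)"
    and "\<forall>\<mu>\<in>Bwords L1 L. \<Psi> \<mu> \<in> Bwords L2 l"
    and "\<forall>x\<in>XL L1. word (\<psi>0 x) l = \<Psi> (word x L)"
    and "v \<in> V L1 L"
  shows "equiv (Bv L1 L v) {(\<mu>, \<mu>'). simv L1 \<psi>0 L v \<mu> \<mu>'}"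
proof (rule equivI)
  show "{(\<mu>, \<mu>'). simv L1 \<psi>0 L v \<mu> \<mu>'} \<subseteq> Bv L1 L v \<times> Bv L1 L v"
    unfolding simv_def Bv_def by blast
  show "refl_on (Bv L1 L v) {(\<mu>, \<mu>'). simv L1 \<psi>0 L v \<mu> \<mu>'}"
    unfolding refl_on_def simv_def Bv_def by blast
  show "sym {(\<mu>, \<mu>'). simv L1 \<psi>0 L v \<mu> \<mu>'}"
    unfolding sym_def by (auto intro: simv_sym)
  show "trans {(\<mu>, \<mu>'). simv L1 \<psi>0 L v \<mu> \<mu>'}"
    using simv_trans[OF assms(1,2,4) _ assms(7,8,9,10,12)] assms(6) unfolding trans_def by blast
qed

end
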